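(* Let $f$ be a DNF with $k$ terms and let $y\in\{0,1\}^n$ satisfy $f_{>\tau}$ and not $f_{\le\tau}$ ($\tau=1000k$). Fix any permutation $\pi$ and let $z_0,z_1,\dots$ be the sweep process started at $y$. Let $i$ be such that $(z_i)_a=y_a$ for all $a\in P(y)$, and let $U_i$ be the set of unanimous indices of $\mathcal{T}_f(z_i)$. If $\mathcal{T}_f(z_i)\setminus(P(y)\cup U_i)$ contains a stripped term of length at most $k$, then $\textsc{GenerateCandidateStem}(f,z_i)$ outputs a valid stem of a term of $f$ satisfied by $y$.
   Context: Terms are sets of literals, a DNF is a set of terms; $|T|$ is the number of literals; $g_{\le L}$ / $g_{>L}$ are the sub-DNFs of terms of length $\le L$ / $>L$. $\mathcal{T}_f(x)$ is the set of terms of $f$ satisfied by $x$. A term $T'$ is a valid stem of a term $T$ if $T'\subseteq T$ and $|T\setminus T'|\le 2k$. Protected set $P(y)$: for each term $T\in f$ not satisfied by $y$, take the literal of $T$ with smallest index not satisfied by $y$; $P(y)$ is the set of these indices. For a term $T$ and $S\subseteq[n]$, the stripped term $T\setminus S$ removes from $T$ all literals $x_i,\overline{x_i}$ with $i\in S$; for a set of terms, stripping is applied to each. Unanimous indices of a set of terms $\mathcal{T}$: all $i$ such that every term of $\mathcal{T}$ contains $x_i$, or every term contains $\overline{x_i}$. $x^{\oplus j}$ is $x$ with bit $j$ flipped. $\textsc{GenerateCandidateStem}(f,x)$: let $I=\{i: f(x^{\oplus i})=0\}$ and output the term $\{x_i:i\in I,x_i=1\}\cup\{\overline{x_i}: i\in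 I, x_i=0\}$. Sweep process: given $y$ with $f(y)=1$ and a permutation $\pi$ listing $[n]$ as $\pi(0),\dots,\pi(n-1)$, $z_0=y$, and $z_{t+1}=z_t^{\oplus\pi(t)}$ if $f(z_t^{\oplus\pi(t)})=1$, else $z_{t+1}=z_t$. *)

theory Defs
  imports Main
begin

text \<open>A literal is a pair (i, b): (i, True) is x_i, (i, False) is the negation of x_i. An assignment in {0,1}^n is
  a function nat => bool (only indices < n are relevant).\<close>

type_synonym lit = "nat \<times> bool"
type_synonym dnf_term = "lit set"
type_synonym dnf = "dnf_term set"
type_synonym assignment = "nat \<Rightarrow> bool"

definition sat_term :: "dnf_term \<Rightarrow> assignment \<Rightarrow> bool" where
  "sat_term T x \<longleftrightarrow> (\<forall>(i, b) \<in> T. x i = b)"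

definition eval_dnf :: "dnf \<Rightarrow> assignment \<Rightarrow> bool" where
  "eval_dnf f x \<longleftrightarrow> (\<exists>T \<in> f. sat_term T x)"

definition short_part :: "dnf \<Rightarrow> nat \<Rightarrow> dnf" where
  "short_part f L = {T \<in> f. card T \<le> L}"

definition long_part :: "dnf \<Rightarrow> nat \<Rightarrow> dnf" where
  "long_part f L = {T \<in> f. card T > L}"

definition sat_terms :: "dnf \<Rightarrow> assignment \<Rightarrow> dnf_term set" where
  "sat_terms f x = {T \<in> f. sat_term T x}"

definition valid_stem :: "nat \<Rightarrow> dnf_term \<Rightarrow> dnf_term \<Rightarrow> bool" where
  "valid_stem k T' T \<longleftrightarrow> T' \<subseteq> T \<and> card (T - T') \<le> 2 * k"

definition protected_set :: "dnf \<Rightarrow> assignment \<Rightarrow> nat set" where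
  "protected_set f y =
     {Min {i. \<exists>b. (i, b) \<in> T \<and> y i \<noteq> b} | T. T \<in> f \<and> \<not> sat_term T y}"

definition strip :: "dnf_term \<Rightarrow> nat set \<Rightarrow> dnf_term" where
  "strip T S = {(i, b) \<in> T. i \<notin> S}"

definition unanimous :: "nat \<Rightarrow> dnf_term set \<Rightarrow> nat set" where
  "unanimous n \<T> = {i. i < n \<and> ((\<forall>T \<in> \<T>. (i, True) \<in> T) \<or> (\<forall>T \<in> \<T>. (i, False) \<in> T))}"

definition flip :: "assignment \<Rightarrow> nat \<Rightarrow> assignment" where
  "flip x j = x(j := \<not> x j)"

definition generate_candidate_stem :: "nat \<Rightarrow> dnf \<Rightarrow> assignment \<Rightarrow> dnf_term" where
  "generate_candidate_stem n f x = {(i, x i) | i. i < n \<and> \<not> eval_dnf f (flip x i)}"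

fun sweep :: "dnf \<Rightarrow> (nat \<Rightarrow> nat) \<Rightarrow> assignment \<Rightarrow> nat \<Rightarrow> assignment" where
  "sweep f \<pi> y 0 = y"
| "sweep f \<pi> y (Suc t) =
     (if eval_dnf f (flip (sweep f \<pi> y t) (\<pi> t)) then flip (sweep f \<pi> y t) (\<pi> t)
      else sweep f \<pi> y t)"

end

theory Submission
  imports Defs
begin

text \<open>Only the agreement of z = z_i with y on P(y) is used.

  Every term violated by y is violated by z at its protected index, so the terms satisfied by z are
  satisfied by y, and a term violated by y can become satisfied by flipping a single bit of z only
  if that bit is in P(y). The candidate stem of z is contained in every term T satisfied by z, and
  a literal of T missing from it sits at an index j with f(z \<oplus> j) = 1. Such a literal is either in the
  stripped term, or j \<in> P(y), or j \<in> U \<setminus> P(y); in the last case a term satisfied by z \<oplus> j is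
  satisfied by y but, by unanimity, not by z, and it determines j. Since |P(y)| is at most the
  number of terms violated by y, the last two kinds together number at most k, so T loses at most
  2k literals.\<close>

definition first_violated :: "dnf_term \<Rightarrow> assignment \<Rightarrow> nat" where
  "first_violated T y = Min {i. \<exists>b. (i, b) \<in> T \<and> y i \<noteq> b}"

lemma protected_set_eq_image:
  "protected_set f y = (\<lambda>T. first_violated T y) ` {T \<in> f. \<not> sat_term T y}"
  unfolding protected_set_def first_violated_def by blast

lemma finite_protected_set: "finite f \<Longrightarrow> finite (protected_set f y)"
  by (simp add: protected_set_eq_image)

lemma card_protected_set_le:
  "finite f \<Longrightarrow> card (protected_set f y) \<le> card {T \<in> f. \<not> sat_term T y}"
  unfolding protected_set_eq_image by (rule card_image_le) simp

lemma first_violated_literal: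
  assumes "finite T" and "\<not> sat_term T y"
  obtains b where "(first_violated T y, b) \<in> T" and "y (first_violated T y) \<noteq> b"
proof -
  let ?V = "{i. \<exists>b. (i, b) \<in> T \<and> y i \<noteq> b}"
  have "?V \<subseteq> fst ` T" by force
  then have "finite ?V" using assms(1) finite_subset by blast
  moreover have "?V \<noteq> {}" using assms(2) unfolding sat_term_def by auto
  ultimately have "first_violated T y \<in> ?V" unfolding first_violated_def by (rule Min_in)
  then show thesis using that by blast
qed

lemma sat_term_flip:
  assumes "sat_term T z" and "(j, z j) \<notin> T"
  shows "sat_term T (flip z j)"
  unfolding sat_term_def flip_def
proof clarify
  fix a b assume "(a, b) \<in> T"
  with assms show "(z(j := \<not> z j)) a = b" unfolding sat_term_def by (cases "a = j") auto
qed

lemma sat_term_flip_violation: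
  assumes "sat_term T (flip z j)" and "(a, b) \<in> T" and "z a \<noteq> b"
  shows "a = j"
  using assms unfolding sat_term_def flip_def by (fastforce split: if_splits)

lemma sat_term_if_agrees_on_protected_set:
  assumes "\<forall>T \<in> f. finite T" and "\<forall>a \<in> protected_set f y. z a = y a"
    and "T \<in> f" and "sat_term T z"
  shows "sat_term T y"
proof (rule ccontr)
  assume "\<not> sat_term T y"
  then obtain b where "(first_violated T y, b) \<in> T" "y (first_violated T y) \<noteq> b"
    using assms(1,3) first_violated_literal by blast
  moreover have "first_violated T y \<in> protected_set f y"
    using \<open>\<not> sat_term T y\<close> assms(3) by (auto simp: protected_set_eq_image)
  ultimately show False using assms(2,4) unfolding sat_term_def by fastforce
qed

lemma flip_index_in_protected_set:
  assumes "\<forall>T \<in> f. finite T" and "\<forall>a \<in> protected_set f y. z a = y a"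
    and "T \<in> f" and "\<not> sat_term T y" and "sat_term T (flip z j)"
  shows "j \<in> protected_set f y"
proof -
  obtain b where b: "(first_violated T y, b) \<in> T" "y (first_violated T y) \<noteq> b"
    using assms(1,3,4) first_violated_literal by blast
  have protected: "first_violated T y \<in> protected_set f y"
    using assms(3,4) by (auto simp: protected_set_eq_image)
  with b assms(2) have "first_violated T y = j"
    by (intro sat_term_flip_violation[OF assms(5)]) auto
  with protected show ?thesis by simp
qed

lemma generate_candidate_stem_subset:
  assumes "T \<in> f" and "sat_term T z"
  shows "generate_candidate_stem n f z \<subseteq> T"
proof
  fix l assume "l \<in> generate_candidate_stem n f z"
  then obtain j where l: "l = (j, z j)" and unsat: "\<not> eval_dnf f (flip z j)"
    unfolding generate_candidate_stem_def by auto
  show "l \<in> T"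
  proof (rule ccontr)
    assume "l \<notin> T"
    with l assms(2) have "sat_term T (flip z j)" by (simp add: sat_term_flip)
    with assms(1) unsat show False unfolding eval_dnf_def by blast
  qed
qed

lemma diff_generate_candidate_stem_subset:
  assumes "sat_term T z" and "\<forall>(j, b) \<in> T. j < n"
  shows "T - generate_candidate_stem n f z
    \<subseteq> strip T S \<union> (\<lambda>j. (j, z j)) ` {j \<in> S. eval_dnf f (flip z j)}"
proof
  fix l assume l: "l \<in> T - generate_candidate_stem n f z"
  obtain j b where jb: "l = (j, b)" by force
  have "b = z j" using l jb assms(1) unfolding sat_term_def by fastforce
  moreover have "eval_dnf f (flip z j)"
    using l jb assms(2) \<open>b = z j\<close> unfolding generate_candidate_stem_def by auto
  ultimately show "l \<in> strip T S \<union> (\<lambda>j. (j, z j)) ` {j \<in> S. eval_dnf f (flip z j)}"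
    using l jb unfolding strip_def by auto
qed

lemma card_diff_generate_candidate_stem_le:
  assumes "finite T" and "finite S" and "sat_term T z" and "\<forall>(j, b) \<in> T. j < n"
  shows "card (T - generate_candidate_stem n f z)
    \<le> card (strip T S) + card {j \<in> S. eval_dnf f (flip z j)}"
proof -
  let ?F = "{j \<in> S. eval_dnf f (flip z j)}"
  have "finite (strip T S)" using assms(1) unfolding strip_def by (auto intro: finite_subset)
  moreover have "finite ?F" using assms(2) by simp
  ultimately have "card (T - generate_candidate_stem n f z)
      \<le> card (strip T S \<union> (\<lambda>j. (j, z j)) ` ?F)"
    by (intro card_mono diff_generate_candidate_stem_subset assms(3,4)) auto
  also have "\<dots> \<le> card (strip T S) + card ((\<lambda>j. (j, z j)) ` ?F)" by (rule card_Un_le)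
  also have "card ((\<lambda>j. (j, z j)) ` ?F) \<le> card ?F" by (rule card_image_le) fact
  finally show ?thesis by simp
qed

lemma card_flippable_unanimous_le:
  assumes "finite f" and "\<forall>T \<in> f. finite T" and agree: "\<forall>a \<in> protected_set f y. z a = y a"
  shows "card {j \<in> unanimous n (sat_terms f z) - protected_set f y. eval_dnf f (flip z j)}
    \<le> card {T \<in> f. sat_term T y \<and> \<not> sat_term T z}"
    (is "card ?W \<le> card ?SY")
proof -
  have "\<forall>j \<in> ?W. \<exists>T. T \<in> f \<and> sat_term T (flip z j)" unfolding eval_dnf_def by blast
  then obtain g where g: "\<And>j. j \<in> ?W \<Longrightarrow> g j \<in> f \<and> sat_term (g j) (flip z j)" by metis
  have g_unsat_z: "\<not> sat_term (g j) z" if "j \<in> ?W" for j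
  proof
    assume "sat_term (g j) z"
    with g[OF that] have "g j \<in> sat_terms f z" unfolding sat_terms_def by simp
    with that obtain b where "(j, b) \<in> g j" unfolding unanimous_def by blast
    with \<open>sat_term (g j) z\<close> g[OF that] show False
      unfolding sat_term_def flip_def by fastforce
  qed
  have "g ` ?W \<subseteq> ?SY"
  proof (rule image_subsetI)
    fix j assume j: "j \<in> ?W"
    have "sat_term (g j) y"
      using flip_index_in_protected_set[OF assms(2) agree, of "g j" j] g[OF j] j by blast
    with g[OF j] g_unsat_z[OF j] show "g j \<in> ?SY" by simp
  qed
  moreover have "inj_on g ?W"
  proof
    fix j j' assume j: "j \<in> ?W" and j': "j' \<in> ?W" and eq: "g j = g j'"
    obtain a b where ab: "(a, b) \<in> g j" "z a \<noteq> b"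
      using g_unsat_z[OF j] unfolding sat_term_def by auto
    have "a = j" using g[OF j] ab by (blast intro: sat_term_flip_violation)
    moreover have "a = j'" using g[OF j'] ab eq by (metis sat_term_flip_violation)
    ultimately show "j = j'" by simp
  qed
  ultimately show ?thesis using assms(1) by (intro card_inj_on_le) auto
qed

lemma card_flippable_le:
  assumes "finite f" and "\<forall>T \<in> f. finite T" and "\<forall>a \<in> protected_set f y. z a = y a"
  shows "card {j \<in> protected_set f y \<union> unanimous n (sat_terms f z). eval_dnf f (flip z j)}
    \<le> card f"
proof -
  let ?P = "protected_set f y"
  let ?W = "{j \<in> unanimous n (sat_terms f z) - ?P. eval_dnf f (flip z j)}"
  let ?UY = "{T \<in> f. \<not> sat_term T y}" and ?SY = "{T \<in> f. sat_term T y \<and> \<not> sat_term T z}"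
  have "finite ?W" by (rule finite_subset[of _ "{..<n}"]) (auto simp: unanimous_def)
  then have "card {j \<in> ?P \<union> unanimous n (sat_terms f z). eval_dnf f (flip z j)}
      \<le> card (?P \<union> ?W)"
    using finite_protected_set[OF assms(1)] by (intro card_mono) auto
  also have "\<dots> \<le> card ?P + card ?W" by (rule card_Un_le)
  also have "\<dots> \<le> card ?UY + card ?SY"
    using card_protected_set_le[OF assms(1)] card_flippable_unanimous_le[OF assms] by (rule add_mono)
  also have "\<dots> = card (?UY \<union> ?SY)"
    using assms(1) by (intro card_Un_disjoint[symmetric]) auto
  also have "\<dots> \<le> card f" using assms(1) by (intro card_mono) auto
  finally show ?thesis .
qed

theorem lemma4p11:
  fixes n k :: nat and f :: dnf and y :: assignment and \<pi> :: "nat \<Rightarrow> nat" and i :: nat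
  assumes f_fin: "finite f"
    and terms_fin: "\<forall>T \<in> f. finite T"
    and vars: "\<forall>T \<in> f. \<forall>(j, b) \<in> T. j < n"
    and k_def: "card f = k"
    and y_long: "eval_dnf (long_part f (1000 * k)) y"
    and y_short: "\<not> eval_dnf (short_part f (1000 * k)) y"
    and perm: "bij_betw \<pi> {..<n} {..<n}"
    and i_le: "i \<le> n"
    and prot: "\<forall>a \<in> protected_set f y. sweep f \<pi> y i a = y a"
    and short_stripped: "\<exists>T \<in> sat_terms f (sweep f \<pi> y i).
          card (strip T (protected_set f y \<union> unanimous n (sat_terms f (sweep f \<pi> y i)))) \<le> k"
  shows "\<exists>T \<in> f. sat_term T y \<and> valid_stem k (generate_candidate_stem n f (sweep f \<pi> y i)) T"
proof -
  define z where "z = sweep f \<pi> y i"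
  define S where "S = protected_set f y \<union> unanimous n (sat_terms f z)"
  obtain T where T: "T \<in> f" "sat_term T z" and short: "card (strip T S) \<le> k"
    using short_stripped unfolding z_def S_def sat_terms_def by auto
  have agree: "\<forall>a \<in> protected_set f y. z a = y a" using prot unfolding z_def .
  have "finite S"
    unfolding S_def using finite_protected_set[OF f_fin]
    by (auto intro: finite_subset[of _ "{..<n}"] simp: unanimous_def)
  then have "card (T - generate_candidate_stem n f z)
      \<le> card (strip T S) + card {j \<in> S. eval_dnf f (flip z j)}"
    using T terms_fin vars by (intro card_diff_generate_candidate_stem_le) auto
  also have "\<dots> \<le> k + k"
    using short card_flippable_le[OF f_fin terms_fin agree] k_def
    unfolding S_def by (intro add_mono) auto
  finally have "card (T - generate_candidate_stem n f z) \<le> 2 * k" by simp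
  moreover have "sat_term T y" by (rule sat_term_if_agrees_on_protected_set) (use T terms_fin agree in auto)
  moreover have "generate_candidate_stem n f z \<subseteq> T" by (rule generate_candidate_stem_subset) (use T in auto)
  ultimately show ?thesis using T(1) unfolding valid_stem_def z_def by blast
qed

end
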